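(* Let $\{T_v\}$ be an extended $(n,d)$-tope arrangement. For each lattice point $u$ of $(n-1)\Delta^{d-1}$ let $\mathbb T(u)=\bigcup_{\bar j\in[\bar d]}T_{u+e_{\bar j}}$. Suppose that for every lattice point $w$ of $(n+1)\Delta^{d-1}$ the graph $\bigcup_{\bar j:\,w_{\bar j}\ge1}T_{w-e_{\bar j}}$ is acyclic. Then for every lattice point $u$ of $(n-1)\Delta^{d-1}$, every tope $T$ whose graph is a subgraph of $\mathbb T(u)$ belongs to the arrangement, i.e. $T=T_v$ where $v=RD(T)$.
   Context: Fix positive integers $n,d$; graphs are subgraphs of the complete bipartite graph with left vertices $[n]$ and right vertices $[\bar d]=\{\bar1,\dots,\bar d\}$, identified with edge sets. $RD$ is the vector of right-vertex degrees; $e_{\bar j}$ a unit vector; lattice points of $k\Delta^{d-1}$ are vectors in $\mathbb Z_{\ge0}^{[\bar d]}$ with coordinate sum $k$. Two acyclic graphs are compatible if whenever both contain a perfect matching between the same $I\subseteq[n]$, $\bar J\subseteq[\bar d]$, these matchings coincide. A tope is a map $T:[n]\to[\bar d]$ (graph $\{(i,T(i))\}$), with position $RD(T)$. An extended $(n,d)$-tope arrangement is a collection of pairwise compatible topes $T_v$, one for each lattice point $v$ of $n\Delta^{d-1}$, with $RD(T_v)=v$. *)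

theory Defs
  imports Main
begin

text \<open>Left vertices [n] = {1..n}, right vertices [d-bar] = {1..d} (a right vertex j-bar is
  encoded by the number j).\<close>

definition is_graph :: "nat \<Rightarrow> nat \<Rightarrow> (nat \<times> nat) set \<Rightarrow> bool" where
  "is_graph n d G \<longleftrightarrow> G \<subseteq> {1..n} \<times> {1..d}"

definition has_cycle :: "(nat \<times> nat) set \<Rightarrow> bool" where
  "has_cycle G \<longleftrightarrow> (\<exists>is js. length is = length js \<and> length is \<ge> 2 \<and> distinct is \<and> distinct js \<and>
     (\<forall>t < length is. (is ! t, js ! t) \<in> G \<and> (is ! ((t + 1) mod length is), js ! t) \<in> G))"

definition acyclic_graph :: "(nat \<times> nat) set \<Rightarrow> bool" where
  "acyclic_graph G \<longleftrightarrow> \<not> has_cycle G"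

definition perfect_matching_in :: "(nat \<times> nat) set \<Rightarrow> nat set \<Rightarrow> nat set \<Rightarrow> (nat \<times> nat) set \<Rightarrow> bool" where
  "perfect_matching_in G I J M \<longleftrightarrow> M \<subseteq> G \<and> M \<subseteq> I \<times> J \<and>
     (\<forall>i\<in>I. \<exists>!j. (i, j) \<in> M) \<and> (\<forall>j\<in>J. \<exists>!i. (i, j) \<in> M)"

definition compatible :: "(nat \<times> nat) set \<Rightarrow> (nat \<times> nat) set \<Rightarrow> bool" where
  "compatible G1 G2 \<longleftrightarrow> (\<forall>I J M1 M2. perfect_matching_in G1 I J M1 \<and> perfect_matching_in G2 I J M2
       \<longrightarrow> M1 = M2)"

text \<open>A tope T : [n] -> [d-bar], identified with its graph {(i, T i)}.\<close>
definition is_tope :: "nat \<Rightarrow> nat \<Rightarrow> (nat \<times> nat) set \<Rightarrow> bool" where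
  "is_tope n d T \<longleftrightarrow> is_graph n d T \<and> (\<forall>i\<in>{1..n}. \<exists>!j. (i, j) \<in> T)"

definition RD :: "(nat \<times> nat) set \<Rightarrow> nat \<Rightarrow> nat" where
  "RD G j = card {i. (i, j) \<in> G}"

text \<open>Lattice points of k Delta^{d-1}: vectors in Z_{>=0}^{[d-bar]} with coordinate sum k
  (as functions vanishing outside {1..d}).\<close>
definition lattice_point :: "nat \<Rightarrow> nat \<Rightarrow> (nat \<Rightarrow> nat) \<Rightarrow> bool" where
  "lattice_point d k v \<longleftrightarrow> (\<forall>j. j \<notin> {1..d} \<longrightarrow> v j = 0) \<and> (\<Sum>j\<in>{1..d}. v j) = k"

text \<open>u + e_j is written u(j := u j + 1); w - e_j (for w j >= 1) is w(j := w j - 1).\<close>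

definition extended_tope_arrangement :: "nat \<Rightarrow> nat \<Rightarrow> ((nat \<Rightarrow> nat) \<Rightarrow> (nat \<times> nat) set) \<Rightarrow> bool" where
  "extended_tope_arrangement n d A \<longleftrightarrow>
     (\<forall>v. lattice_point d n v \<longrightarrow> is_tope n d (A v) \<and> RD (A v) = v) \<and>
     (\<forall>v w. lattice_point d n v \<and> lattice_point d n w \<longrightarrow> compatible (A v) (A w))"

end

theory Submission
  imports Defs
begin

text \<open>
  View a tope as a map from [n] to [d-bar]. Call a nonempty set Z of right vertices a rotation set
  for two maps f, g if every z in Z is f i for some i with g i in Z - {z}. Following z to g i
  inside Z closes a cycle in the union of the graphs of f and g, along which f and g induce two
  different perfect matchings. So there is no rotation set when the union is acyclic or the two
  graphs are compatible, and then two maps with the same right degrees are equal.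

  Applied to the topes T_{u+e_x} of the star of u this gives rigidity: if T_{u+e_x} sends i to y,
  so does T_{u+e_y}; and if T_{u+e_x} sends l to x and T_{u+e_y} sends l to y, they agree off l.
  For a tope T in the star, induct on the number of left vertices where T differs from some
  T_{u+e_r}. Among them pick l minimising the difference between T_{u+e_{T l}} and T_{u+e_r}; then
  these two agree at all other such vertices. The tope X1 (T, but following T_{u+e_r} at l) and
  X2 (T at the other differences, T_{u+e_{T l}} elsewhere) have fewer differences from T_{u+e_r}
  resp. T_{u+e_{T l}}, so they lie in the arrangement by induction, and their graphs cover T.
  With p = T_{u+e_r}(l), the right degrees of X1, X2 and T are w - e_{T l}, w - e_r and w - e_p
  for w = RD(T) + e_p, so acyclicity at w forbids a rotation set for T_{RD(T)} and T.
\<close>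

definition graph_on :: "nat set \<Rightarrow> (nat \<Rightarrow> nat) \<Rightarrow> (nat \<times> nat) set" where
  "graph_on L f = (\<lambda>i. (i, f i)) ` L"

lemma mem_graph_on [simp]: "(i, j) \<in> graph_on L f \<longleftrightarrow> i \<in> L \<and> j = f i"
  by (auto simp: graph_on_def)

lemma graph_on_cong: "(\<And>i. i \<in> L \<Longrightarrow> f i = g i) \<Longrightarrow> graph_on L f = graph_on L g"
  by (auto simp: graph_on_def)

definition fiber_card :: "nat set \<Rightarrow> (nat \<Rightarrow> nat) \<Rightarrow> nat \<Rightarrow> nat" where
  "fiber_card L f j = card {i \<in> L. f i = j}"

lemma RD_graph_on: "RD (graph_on L f) = fiber_card L f"
proof
  fix j
  have "{i. (i, j) \<in> graph_on L f} = {i \<in> L. f i = j}"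
    by auto
  then show "RD (graph_on L f) j = fiber_card L f j"
    by (simp add: RD_def fiber_card_def)
qed

lemma fiber_card_cong: "(\<And>i. i \<in> L \<Longrightarrow> f i = g i) \<Longrightarrow> fiber_card L f = fiber_card L g"
  unfolding fiber_card_def by (intro ext arg_cong [where f = card]) auto

lemma fiber_card_eq_sum: "finite L \<Longrightarrow> fiber_card L f j = (\<Sum>i\<in>L. of_bool (f i = j))"
  by (simp add: fiber_card_def of_bool_def sum.If_cases Int_def)

lemma fiber_card_remove:
  assumes "finite L" and "i \<in> L"
  shows "fiber_card L f j = fiber_card (L - {i}) f j + of_bool (f i = j)"
  unfolding fiber_card_eq_sum [OF assms(1)] fiber_card_eq_sum [OF finite_Diff [OF assms(1)]]
  by (simp only: sum.remove [OF assms] add.commute)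

lemma fiber_card_fun_upd:
  assumes "finite L" and "i \<in> L"
  shows "(fiber_card L (f(i := y)))(f i := fiber_card L (f(i := y)) (f i) + 1) =
    (fiber_card L f)(y := fiber_card L f y + 1)"
proof
  fix j
  have "fiber_card (L - {i}) (f(i := y)) j = fiber_card (L - {i}) f j"
    by (rule fun_cong [OF fiber_card_cong]) simp
  then show "((fiber_card L (f(i := y)))(f i := fiber_card L (f(i := y)) (f i) + 1)) j =
      ((fiber_card L f)(y := fiber_card L f y + 1)) j"
    using fiber_card_remove [OF assms, of "f(i := y)"] fiber_card_remove [OF assms, of f] by auto
qed

lemma fiber_card_swap:
  assumes "finite L"
    and "\<And>i. i \<in> L \<Longrightarrow> f1 i = g1 i \<and> f2 i = g2 i \<or> f1 i = g2 i \<and> f2 i = g1 i"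
  shows "fiber_card L f1 j + fiber_card L f2 j = fiber_card L g1 j + fiber_card L g2 j"
proof -
  have "(\<Sum>i\<in>L. of_bool (f1 i = j) + of_bool (f2 i = j)) =
        (\<Sum>i\<in>L. of_bool (g1 i = j) + of_bool (g2 i = j) :: nat)"
  proof (rule sum.cong [OF refl])
    fix i
    assume "i \<in> L"
    then show "of_bool (f1 i = j) + of_bool (f2 i = j) = (of_bool (g1 i = j) + of_bool (g2 i = j) :: nat)"
      using assms(2) [OF \<open>i \<in> L\<close>] by (elim disjE conjE) (simp_all add: add.commute)
  qed
  then show ?thesis
    using assms(1) by (simp add: fiber_card_eq_sum sum.distrib)
qed

lemma lattice_point_fiber_card:
  assumes "\<And>i. i \<in> {1..n} \<Longrightarrow> f i \<in> {1..d}"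
  shows "lattice_point d n (fiber_card {1..n} f)"
proof -
  have "(\<Sum>j\<in>{1..d}. fiber_card {1..n} f j) = (\<Sum>i\<in>{1..n}. \<Sum>j\<in>{1..d}. of_bool (f i = j))"
    by (simp only: fiber_card_eq_sum [OF finite_atLeastAtMost]) (rule sum.swap)
  also have "\<dots> = (\<Sum>i\<in>{1..n}. 1)"
    using assms by (intro sum.cong) (auto simp: of_bool_def)
  finally show ?thesis
    using assms by (auto simp: lattice_point_def fiber_card_def)
qed

lemma lattice_point_add_unit:
  assumes "lattice_point d k u" and "x \<in> {1..d}"
  shows "lattice_point d (Suc k) (u(x := u x + 1))"
proof -
  have "(\<Sum>j\<in>{1..d}. (u(x := u x + 1)) j) = Suc (\<Sum>j\<in>{1..d}. u j)"
    using assms(2) by (simp add: sum.remove [where x = x])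
  then show ?thesis
    using assms by (auto simp: lattice_point_def)
qed

lemma is_tope_graph_on:
  assumes "is_tope n d T"
  shows "T = graph_on {1..n} (\<lambda>i. THE j. (i, j) \<in> T)"
    and "i \<in> {1..n} \<Longrightarrow> (THE j. (i, j) \<in> T) \<in> {1..d}"
proof -
  have T: "T \<subseteq> {1..n} \<times> {1..d}" and unique: "\<And>i. i \<in> {1..n} \<Longrightarrow> \<exists>!j. (i, j) \<in> T"
    using assms by (auto simp: is_tope_def is_graph_def)
  then have mem: "(i, THE j. (i, j) \<in> T) \<in> T" if "i \<in> {1..n}" for i
    using that by (metis theI')
  show "T = graph_on {1..n} (\<lambda>i. THE j. (i, j) \<in> T)"
  proof (intro set_eqI iffI)
    fix e
    assume "e \<in> T"
    with T obtain i j where "e = (i, j)" and "i \<in> {1..n}"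
      by blast
    with \<open>e \<in> T\<close> unique show "e \<in> graph_on {1..n} (\<lambda>i. THE j. (i, j) \<in> T)"
      by (simp add: the1_equality)
  qed (use mem in \<open>auto simp: graph_on_def\<close>)
  show "i \<in> {1..n} \<Longrightarrow> (THE j. (i, j) \<in> T) \<in> {1..d}"
    using mem T by blast
qed

definition rotation_set :: "nat set \<Rightarrow> (nat \<Rightarrow> nat) \<Rightarrow> (nat \<Rightarrow> nat) \<Rightarrow> nat set \<Rightarrow> bool" where
  "rotation_set L f g Z \<longleftrightarrow> finite Z \<and> Z \<noteq> {} \<and> (\<forall>z\<in>Z. \<exists>i\<in>L. f i = z \<and> g i \<in> Z - {z})"

lemma rotation_set_mono: "rotation_set L f g Z \<Longrightarrow> L \<subseteq> M \<Longrightarrow> rotation_set M f g Z"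
  unfolding rotation_set_def by blast

lemma fixpoint_free_map_has_cycle:
  assumes "finite Z" and "Z \<noteq> {}" and phi: "\<And>z. z \<in> Z \<Longrightarrow> phi z \<in> Z - {z}"
  obtains zs where "distinct zs" and "2 \<le> length zs" and "set zs \<subseteq> Z"
    and "map phi zs = rotate1 zs"
proof -
  obtain z0 where "z0 \<in> Z"
    using assms(2) by blast
  define s where "s k = (phi ^^ k) z0" for k
  have s_Suc: "s (Suc k) = phi (s k)" for k
    by (simp add: s_def)
  have s_in: "s k \<in> Z" for k
    by (induction k) (use \<open>z0 \<in> Z\<close> phi in \<open>auto simp: s_def\<close>)
  have "finite (range s)"
    using s_in by (intro finite_subset [OF _ assms(1)]) auto
  then have "\<not> inj s"
    using finite_imageD infinite_UNIV_nat by blast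
  then have "\<exists>t. \<exists>a<t. s a = s t"
    by (metis injI linorder_neqE_nat)
  then obtain t where "\<exists>a<t. s a = s t" and before: "\<And>t'. t' < t \<Longrightarrow> \<not> (\<exists>a<t'. s a = s t')"
    using exists_least_iff [where P = "\<lambda>t. \<exists>a<t. s a = s t"] by blast
  then obtain a where "a < t" and "s a = s t"
    by blast
  define zs where "zs = map s [a..<t]"
  have "inj_on s {a..<t}"
    by (rule linorder_inj_onI') (use before in auto)
  then have "distinct zs"
    by (simp add: zs_def distinct_map)
  moreover have "t \<noteq> Suc a"
    using phi s_in \<open>s a = s t\<close> by (metis Diff_iff insertI1 s_Suc)
  then have "2 \<le> length zs"
    using \<open>a < t\<close> by (simp add: zs_def)
  moreover have "set zs \<subseteq> Z"
    using s_in by (auto simp: zs_def)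
  moreover have "map phi zs = rotate1 zs"
  proof -
    have "map phi zs = map (s \<circ> Suc) [a..<t]"
      by (simp add: zs_def s_Suc comp_def)
    also have "\<dots> = map s [Suc a..<Suc t]"
      by (simp only: map_map [symmetric] map_Suc_upt)
    also have "\<dots> = map s [Suc a..<t] @ [s a]"
      using \<open>a < t\<close> \<open>s a = s t\<close> by (subst upt_Suc_append) auto
    also have "\<dots> = rotate1 zs"
      using \<open>a < t\<close> by (simp add: zs_def upt_conv_Cons)
    finally show ?thesis .
  qed
  ultimately show ?thesis
    using that by blast
qed

lemma rotation_set_cycle:
  assumes "rotation_set L f g Z"
  obtains zs h where "\<And>z. z \<in> set zs \<Longrightarrow> h z \<in> L \<and> f (h z) = z \<and> g (h z) \<noteq> z"
    and "distinct zs" and "2 \<le> length zs" and "map (g \<circ> h) zs = rotate1 zs"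
proof -
  obtain h where h: "\<And>z. z \<in> Z \<Longrightarrow> h z \<in> L \<and> f (h z) = z \<and> g (h z) \<in> Z - {z}"
    using assms unfolding rotation_set_def by metis
  moreover obtain zs where "distinct zs" "2 \<le> length zs" "set zs \<subseteq> Z" "map (g \<circ> h) zs = rotate1 zs"
    using fixpoint_free_map_has_cycle [of Z "g \<circ> h"] assms h unfolding rotation_set_def by auto
  ultimately show ?thesis
    by (intro that [of zs h]) auto
qed

lemma rotation_set_has_cycle:
  assumes "rotation_set L f g Z"
  shows "has_cycle (graph_on L f \<union> graph_on L g)"
proof -
  obtain zs h where h: "\<And>z. z \<in> set zs \<Longrightarrow> h z \<in> L \<and> f (h z) = z \<and> g (h z) \<noteq> z"
    and "distinct zs" and "2 \<le> length zs" and rot: "map (g \<circ> h) zs = rotate1 zs"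
    using rotation_set_cycle [OF assms] by metis
  define "is" where "is = map h zs"
  define js where "js = rotate1 zs"
  have "inj_on h (set zs)"
    using h by (metis inj_on_inverseI)
  then have "distinct is"
    using \<open>distinct zs\<close> by (simp add: is_def distinct_map)
  moreover have "(is ! t, js ! t) \<in> graph_on L g" if "t < length zs" for t
    using that h rot [THEN arg_cong [where f = "\<lambda>xs. xs ! t"]] by (simp add: is_def js_def)
  moreover have "(is ! ((t + 1) mod length is), js ! t) \<in> graph_on L f" if "t < length zs" for t
  proof -
    have "(t + 1) mod length zs < length zs"
      using that by (intro mod_less_divisor) linarith
    then show ?thesis
      using h [OF nth_mem] that by (simp add: is_def js_def nth_rotate1)
  qed
  ultimately show ?thesis
    unfolding has_cycle_def using \<open>distinct zs\<close> \<open>2 \<le> length zs\<close>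
    by (intro exI [of _ "is"] exI [of _ js]) (simp add: is_def js_def)
qed

lemma has_cycle_mono: "has_cycle G \<Longrightarrow> G \<subseteq> H \<Longrightarrow> has_cycle H"
  unfolding has_cycle_def by blast

lemma perfect_matching_in_image:
  assumes "inj_on h J" and "bij_betw k J J" and "(\<lambda>z. (h z, k z)) ` J \<subseteq> G"
  shows "perfect_matching_in G (h ` J) J ((\<lambda>z. (h z, k z)) ` J)"
  unfolding perfect_matching_in_def
proof (intro conjI ballI)
  show "(\<lambda>z. (h z, k z)) ` J \<subseteq> h ` J \<times> J"
    using assms(2) by (auto simp: bij_betw_def)
next
  fix i
  assume "i \<in> h ` J"
  then obtain z where "z \<in> J" and "i = h z"
    by blast
  then show "\<exists>!j. (i, j) \<in> (\<lambda>z. (h z, k z)) ` J"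
    using assms(1) by (auto dest: inj_onD)
next
  fix j
  assume "j \<in> J"
  then obtain z where "z \<in> J" and "j = k z"
    using assms(2) by (auto simp: bij_betw_def)
  then show "\<exists>!i. (i, j) \<in> (\<lambda>z. (h z, k z)) ` J"
    using assms(2) by (auto simp: bij_betw_def dest: inj_onD)
qed (use assms(3) in blast)

lemma rotation_set_not_compatible:
  assumes "rotation_set L f g Z"
  shows "\<not> compatible (graph_on L f) (graph_on L g)"
proof
  assume compat: "compatible (graph_on L f) (graph_on L g)"
  obtain zs h where h: "\<And>z. z \<in> set zs \<Longrightarrow> h z \<in> L \<and> f (h z) = z \<and> g (h z) \<noteq> z"
    and "distinct zs" and "2 \<le> length zs" and rot: "map (g \<circ> h) zs = rotate1 zs"
    using rotation_set_cycle [OF assms] by metis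
  have "inj_on h (set zs)"
    using h by (metis inj_on_inverseI)
  have "bij_betw (g \<circ> h) (set zs) (set zs)"
    using rot \<open>distinct zs\<close> unfolding bij_betw_def
    by (metis distinct_map distinct1_rotate set_map set_rotate1)
  then have "perfect_matching_in (graph_on L g) (h ` set zs) (set zs) ((\<lambda>z. (h z, (g \<circ> h) z)) ` set zs)"
    by (rule perfect_matching_in_image [OF \<open>inj_on h (set zs)\<close>]) (use h in auto)
  moreover have "perfect_matching_in (graph_on L f) (h ` set zs) (set zs) ((\<lambda>z. (h z, id z)) ` set zs)"
    by (rule perfect_matching_in_image [OF \<open>inj_on h (set zs)\<close> bij_betw_id]) (use h in auto)
  ultimately have same: "(\<lambda>z. (h z, id z)) ` set zs = (\<lambda>z. (h z, (g \<circ> h) z)) ` set zs"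
    using compat unfolding compatible_def by blast
  obtain z where "z \<in> set zs"
    using \<open>2 \<le> length zs\<close> by (cases zs) auto
  then have "(h z, z) \<in> (\<lambda>z. (h z, (g \<circ> h) z)) ` set zs"
    unfolding same [symmetric] by auto
  then obtain z' where "z' \<in> set zs" "h z = h z'" "z = g (h z')"
    by auto
  then show False
    using h \<open>z \<in> set zs\<close> \<open>inj_on h (set zs)\<close> by (metis inj_onD)
qed

lemma eq_on_if_no_rotation_set:
  assumes "finite L" and no_rot: "\<And>Z. \<not> rotation_set L f g Z"
    and deg: "\<And>j. fiber_card L g j \<le> fiber_card L f j \<or> (\<exists>i\<in>L. f i = j \<and> g i \<noteq> j)"
    and "i \<in> L"
  shows "f i = g i"
proof (rule ccontr)
  assume "f i \<noteq> g i"
  define Z where "Z = f ` {k \<in> L. f k \<noteq> g k}"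
  have "g k \<in> Z" if "k \<in> L" and "f k \<noteq> g k" for k
  proof (rule ccontr)
    assume "g k \<notin> Z"
    then have "{k' \<in> L. f k' = g k} \<subseteq> {k' \<in> L. g k' = g k}"
      unfolding Z_def by (auto simp: image_iff)
    moreover have "k \<notin> {k' \<in> L. f k' = g k}" and "k \<in> {k' \<in> L. g k' = g k}"
      using that by auto
    ultimately have "{k' \<in> L. f k' = g k} \<subset> {k' \<in> L. g k' = g k}"
      by blast
    then have "fiber_card L f (g k) < fiber_card L g (g k)"
      unfolding fiber_card_def using assms(1) by (intro psubset_card_mono) auto
    then show False
      using deg [of "g k"] \<open>g k \<notin> Z\<close> unfolding Z_def by (fastforce simp: image_iff)
  qed
  then have "rotation_set L f g Z"
    using assms(1) \<open>i \<in> L\<close> \<open>f i \<noteq> g i\<close> unfolding rotation_set_def Z_def by auto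
  with no_rot show False
    by blast
qed

locale tope_arrangement =
  fixes n d :: nat and A :: "(nat \<Rightarrow> nat) \<Rightarrow> (nat \<times> nat) set"
  assumes arrangement: "extended_tope_arrangement n d A"
begin

definition tope_map :: "(nat \<Rightarrow> nat) \<Rightarrow> nat \<Rightarrow> nat" where
  "tope_map v i = (THE j. (i, j) \<in> A v)"

lemma is_tope_A: "lattice_point d n v \<Longrightarrow> is_tope n d (A v)"
  using arrangement by (simp add: extended_tope_arrangement_def)

lemma graph_tope_map: "lattice_point d n v \<Longrightarrow> A v = graph_on {1..n} (tope_map v)"
  using is_tope_graph_on(1) [OF is_tope_A] by (simp add: tope_map_def [abs_def])

lemma tope_map_range: "lattice_point d n v \<Longrightarrow> i \<in> {1..n} \<Longrightarrow> tope_map v i \<in> {1..d}"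
  using is_tope_graph_on(2) [OF is_tope_A] by (simp add: tope_map_def)

lemma fiber_card_tope_map: "lattice_point d n v \<Longrightarrow> fiber_card {1..n} (tope_map v) = v"
  using arrangement graph_tope_map by (metis RD_graph_on extended_tope_arrangement_def)

lemma no_rotation_set_tope_map:
  assumes "lattice_point d n v" and "lattice_point d n w"
  shows "\<not> rotation_set {1..n} (tope_map v) (tope_map w) Z"
proof -
  have "compatible (A v) (A w)"
    using arrangement assms by (simp add: extended_tope_arrangement_def)
  then show ?thesis
    using rotation_set_not_compatible graph_tope_map [OF assms(1)] graph_tope_map [OF assms(2)] by metis
qed

definition union_below :: "(nat \<Rightarrow> nat) \<Rightarrow> (nat \<times> nat) set" where
  "union_below w = (\<Union>j\<in>{j\<in>{1..d}. w j \<ge> 1}. A (w(j := w j - 1)))"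

lemma A_subset_union_below:
  assumes "r \<in> {1..d}" and "v(r := v r + 1) = w"
  shows "A v \<subseteq> union_below w"
proof -
  have "r \<in> {j\<in>{1..d}. w j \<ge> 1}"
    using assms by auto
  then have "A (w(r := w r - 1)) \<subseteq> union_below w"
    unfolding union_below_def by (rule UN_upper)
  moreover have "w(r := w r - 1) = v"
    using assms(2) by auto
  ultimately show ?thesis
    by simp
qed

end

locale acyclic_tope_arrangement = tope_arrangement +
  assumes acyclic: "lattice_point d (n + 1) w \<Longrightarrow> acyclic_graph (union_below w)"
begin

lemma A_fiber_card_if_below:
  assumes t: "\<And>i. i \<in> {1..n} \<Longrightarrow> t i \<in> {1..d}" and "p \<in> {1..d}"
    and below: "graph_on {1..n} t \<subseteq> union_below ((fiber_card {1..n} t)(p := fiber_card {1..n} t p + 1))"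
  shows "A (fiber_card {1..n} t) = graph_on {1..n} t"
proof -
  define v where "v = fiber_card {1..n} t"
  have v: "lattice_point d n v"
    unfolding v_def using t by (rule lattice_point_fiber_card)
  have "\<not> has_cycle (union_below (v(p := v p + 1)))"
    using acyclic [of "v(p := v p + 1)"] lattice_point_add_unit [OF v \<open>p \<in> {1..d}\<close>]
    by (simp add: acyclic_graph_def)
  moreover have "graph_on {1..n} (tope_map v) \<union> graph_on {1..n} t \<subseteq> union_below (v(p := v p + 1))"
    using A_subset_union_below [of p v, OF \<open>p \<in> {1..d}\<close> refl] graph_tope_map [OF v] below
    by (simp add: v_def)
  ultimately have no_rotation: "\<not> rotation_set {1..n} (tope_map v) t Z" for Z
    using rotation_set_has_cycle has_cycle_mono by blast
  have "fiber_card {1..n} (tope_map v) = fiber_card {1..n} t"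
    using fiber_card_tope_map [OF v] by (simp add: v_def)
  then have "tope_map v i = t i" if "i \<in> {1..n}" for i
    using eq_on_if_no_rotation_set [of "{1..n}" "tope_map v" t] no_rotation that by simp
  then have "graph_on {1..n} (tope_map v) = graph_on {1..n} t"
    by (rule graph_on_cong)
  then show ?thesis
    using graph_tope_map [OF v] unfolding v_def [symmetric] by simp
qed

end

locale tope_star = tope_arrangement +
  fixes u :: "nat \<Rightarrow> nat"
  assumes n_pos: "1 \<le> n" and lattice_point_u: "lattice_point d (n - 1) u"
begin

definition star :: "nat \<Rightarrow> nat \<Rightarrow> nat" where
  "star x = tope_map (u(x := u x + 1))"

lemma lattice_point_star_index: "x \<in> {1..d} \<Longrightarrow> lattice_point d n (u(x := u x + 1))"
  using lattice_point_add_unit [OF lattice_point_u] n_pos by (simp add: Suc_diff_le)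

lemma graph_star: "x \<in> {1..d} \<Longrightarrow> A (u(x := u x + 1)) = graph_on {1..n} (star x)"
  unfolding star_def by (rule graph_tope_map [OF lattice_point_star_index])

lemma star_range: "x \<in> {1..d} \<Longrightarrow> i \<in> {1..n} \<Longrightarrow> star x i \<in> {1..d}"
  unfolding star_def by (rule tope_map_range [OF lattice_point_star_index])

lemma fiber_card_star: "x \<in> {1..d} \<Longrightarrow> fiber_card {1..n} (star x) = u(x := u x + 1)"
  unfolding star_def by (rule fiber_card_tope_map [OF lattice_point_star_index])

lemma no_rotation_set_star:
  "x \<in> {1..d} \<Longrightarrow> y \<in> {1..d} \<Longrightarrow> \<not> rotation_set {1..n} (star x) (star y) Z"
  unfolding star_def by (rule no_rotation_set_tope_map [OF lattice_point_star_index lattice_point_star_index])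

lemma star_self:
  assumes "x \<in> {1..d}" and "i \<in> {1..n}"
  shows "star (star x i) i = star x i"
proof (rule ccontr)
  define y where "y = star x i"
  assume "star (star x i) i \<noteq> star x i"
  then have "star y i \<noteq> y"
    by (simp add: y_def)
  have y: "y \<in> {1..d}"
    using star_range [OF assms] by (simp add: y_def)
  have "fiber_card {1..n} (star y) j \<le> fiber_card {1..n} (star x) j \<or>
      (\<exists>k\<in>{1..n}. star x k = j \<and> star y k \<noteq> j)" for j
  proof (cases "j = y")
    case True
    then show ?thesis
      using assms(2) \<open>star y i \<noteq> y\<close> by (auto simp: y_def)
  next
    case False
    then show ?thesis
      using fiber_card_star [OF y] fiber_card_star [OF assms(1)] by simp
  qed
  then have "star x i = star y i"
    using eq_on_if_no_rotation_set [OF _ no_rotation_set_star [OF assms(1) y]] assms(2) by simp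
  with \<open>star y i \<noteq> y\<close> show False
    by (metis y_def)
qed

lemma star_agree_off:
  assumes "x \<in> {1..d}" and "y \<in> {1..d}" and "l \<in> {1..n}"
    and "star x l = x" and "star y l = y" and "i \<in> {1..n} - {l}"
  shows "star x i = star y i"
proof -
  have off_l: "fiber_card ({1..n} - {l}) (star z) = u" if "z \<in> {1..d}" and "star z l = z" for z
  proof
    fix j
    show "fiber_card ({1..n} - {l}) (star z) j = u j"
      using fiber_card_remove [OF _ \<open>l \<in> {1..n}\<close>, of "star z" j] fiber_card_star [OF \<open>z \<in> {1..d}\<close>]
        \<open>star z l = z\<close> by (cases "z = j") auto
  qed
  have no_rotation: "\<not> rotation_set ({1..n} - {l}) (star x) (star y) Z" for Z
    using no_rotation_set_star [OF assms(1,2)] rotation_set_mono by blast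
  have "fiber_card ({1..n} - {l}) (star y) j \<le> fiber_card ({1..n} - {l}) (star x) j" for j
    using off_l [OF assms(1,4)] off_l [OF assms(2,5)] by simp
  then show ?thesis
    by (intro eq_on_if_no_rotation_set [OF _ no_rotation _ assms(6)]) auto
qed

lemma ex_star_eq_star_neq:
  assumes "x \<in> {1..d}" and "r \<in> {1..d}" and "x \<noteq> r"
  shows "\<exists>i\<in>{1..n}. star x i = x \<and> star r i \<noteq> x"
proof (rule ccontr)
  assume "\<not> ?thesis"
  then have "{i \<in> {1..n}. star x i = x} \<subseteq> {i \<in> {1..n}. star r i = x}"
    by auto
  then have "fiber_card {1..n} (star x) x \<le> fiber_card {1..n} (star r) x"
    unfolding fiber_card_def by (intro card_mono) auto
  then show False
    using assms fiber_card_star [OF assms(1)] fiber_card_star [OF assms(2)] by simp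
qed

definition in_star :: "(nat \<Rightarrow> nat) \<Rightarrow> bool" where
  "in_star t \<longleftrightarrow> (\<forall>i\<in>{1..n}. t i \<in> {1..d} \<and> star (t i) i = t i)"

definition star_diff :: "nat \<Rightarrow> nat \<Rightarrow> nat set" where
  "star_diff r x = {i \<in> {1..n}. star r i \<noteq> star x i}"

lemma finite_star_diff [simp]: "finite (star_diff r x)"
  by (simp add: star_diff_def)

lemma star_diff_exchange:
  assumes "a \<in> {1..d}" and "r \<in> {1..d}" and "l \<in> {1..n}" and "star a l = a"
  shows "star_diff r (star r l) = star_diff r a - {l}"
proof -
  have p: "star r l \<in> {1..d}" and "star (star r l) l = star r l"
    using star_range star_self assms(2,3) by auto
  then have agree: "star a i = star (star r l) i" if "i \<in> {1..n} - {l}" for i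
    using star_agree_off [OF assms(1) p assms(3,4)] that by blast
  show ?thesis
  proof (intro set_eqI)
    fix i
    show "i \<in> star_diff r (star r l) \<longleftrightarrow> i \<in> star_diff r a - {l}"
    proof (cases "i = l")
      case True
      then show ?thesis
        using \<open>star (star r l) l = star r l\<close> by (simp add: star_diff_def)
    next
      case False
      then show ?thesis
        using agree [of i] by (auto simp: star_diff_def)
    qed
  qed
qed

lemma card_star_diff_le:
  assumes "r \<in> {1..d}" and "b \<in> {1..d}" and "m \<in> {1..n}" and "star b m = b"
    and "x \<in> {1..d}" and "m \<in> star_diff r x"
  shows "card (star_diff r b) \<le> card (star_diff r x)"
  using assms(5,6)
proof (induction "card (star_diff r x)" arbitrary: x rule: less_induct)
  case less
  have "x \<noteq> r"
    using less.prems(2) by (auto simp: star_diff_def)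
  then obtain i where i: "i \<in> {1..n}" "star x i = x" "star r i \<noteq> x"
    using ex_star_eq_star_neq [OF less.prems(1) assms(1)] by blast
  show ?case
  proof (cases "i = m")
    case True
    then have "star b k = star x k" if "k \<in> {1..n} - {m}" for k
      using star_agree_off [OF assms(2) less.prems(1) assms(3,4)] i that by auto
    then have "k \<in> star_diff r b \<Longrightarrow> k \<in> star_diff r x" for k
      using less.prems(2) by (cases "k = m") (auto simp: star_diff_def)
    then have "star_diff r b \<subseteq> star_diff r x"
      by blast
    then show ?thesis
      by (intro card_mono) simp_all
  next
    case False
    have diff: "star_diff r (star r i) = star_diff r x - {i}"
      by (rule star_diff_exchange [OF less.prems(1) assms(1) i(1,2)])
    have "i \<in> star_diff r x"
      using i by (simp add: star_diff_def)
    then have "card (star_diff r (star r i)) < card (star_diff r x)"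
      unfolding diff by (rule card_Diff1_less [OF finite_star_diff])
    moreover have "m \<in> star_diff r (star r i)"
      unfolding diff using less.prems(2) False by blast
    ultimately show ?thesis
      using less.hyps star_range [OF assms(1) i(1)] by (meson order.strict_implies_order order_trans)
  qed
qed

lemma exchange_vertex_exists:
  assumes "in_star t" and "r \<in> {1..d}" and "\<exists>i\<in>{1..n}. t i \<noteq> star r i"
  obtains l where "l \<in> {1..n}" and "t l \<noteq> star r l"
    and "\<And>m. m \<in> {1..n} \<Longrightarrow> t m \<noteq> star r m \<Longrightarrow> m \<noteq> l \<Longrightarrow> star (t l) m = star r m"
proof -
  define B where "B = {i \<in> {1..n}. t i \<noteq> star r i}"
  obtain l where "l \<in> B" and least: "\<And>m. m \<in> B \<Longrightarrow> card (star_diff r (t l)) \<le> card (star_diff r (t m))"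
    using assms(3) ex_has_least_nat [of "\<lambda>l. l \<in> B" _ "\<lambda>l. card (star_diff r (t l))"]
    unfolding B_def by blast
  then have l: "l \<in> {1..n}" "t l \<noteq> star r l"
    by (auto simp: B_def)
  with assms(1) have a: "t l \<in> {1..d}" "star (t l) l = t l"
    by (auto simp: in_star_def)
  have diff: "star_diff r (star r l) = star_diff r (t l) - {l}"
    by (rule star_diff_exchange [OF a(1) assms(2) l(1) a(2)])
  have "star (t l) m = star r m" if "m \<in> B" and "m \<noteq> l" for m
  proof (rule ccontr)
    assume "star (t l) m \<noteq> star r m"
    with diff that have m: "m \<in> star_diff r (star r l)"
      by (auto simp: star_diff_def B_def)
    have "t m \<in> {1..d}" and "star (t m) m = t m" and "m \<in> {1..n}"
      using assms(1) that by (auto simp: in_star_def B_def)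
    then have "card (star_diff r (t m)) \<le> card (star_diff r (star r l))"
      using card_star_diff_le [OF assms(2)] star_range [OF assms(2) l(1)] m by blast
    also have "\<dots> < card (star_diff r (t l))"
      unfolding diff using l a by (intro card_Diff1_less) (auto simp: star_diff_def)
    also have "\<dots> \<le> card (star_diff r (t m))"
      using least that(1) .
    finally show False
      by simp
  qed
  then show ?thesis
    using that l unfolding B_def by blast
qed

definition patch :: "nat set \<Rightarrow> (nat \<Rightarrow> nat) \<Rightarrow> nat \<Rightarrow> nat \<Rightarrow> nat" where
  "patch C t x i = (if i \<in> C then t i else star x i)"

lemma in_star_patch:
  assumes "in_star t" and "x \<in> {1..d}"
  shows "in_star (patch C t x)"
  using assms(1) star_range [OF assms(2)] star_self [OF assms(2)] by (auto simp: in_star_def patch_def)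

lemma fiber_card_patch:
  assumes "a \<in> {1..d}" and "r \<in> {1..d}" and "\<And>i. i \<in> C \<Longrightarrow> star a i = star r i"
  shows "(fiber_card {1..n} (patch C t a))(r := fiber_card {1..n} (patch C t a) r + 1) =
    (fiber_card {1..n} (patch C t r))(a := fiber_card {1..n} (patch C t r) a + 1)"
proof
  fix j
  have "fiber_card {1..n} (patch C t a) j + fiber_card {1..n} (star r) j =
      fiber_card {1..n} (patch C t r) j + fiber_card {1..n} (star a) j"
    by (rule fiber_card_swap) (auto simp: patch_def assms(3))
  then show "((fiber_card {1..n} (patch C t a))(r := fiber_card {1..n} (patch C t a) r + 1)) j =
      ((fiber_card {1..n} (patch C t r))(a := fiber_card {1..n} (patch C t r) a + 1)) j"
    using fiber_card_star [OF assms(1)] fiber_card_star [OF assms(2)] by auto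
qed

lemma exchange_patches:
  assumes "in_star t" and "l \<in> {1..n}" and C: "C = {i \<in> {1..n}. t i \<noteq> star r i} - {l}"
  shows "graph_on {1..n} t \<subseteq> graph_on {1..n} (patch C t r) \<union> graph_on {1..n} (patch C t (t l))"
    and "(fiber_card {1..n} (patch C t r))(t l := fiber_card {1..n} (patch C t r) (t l) + 1) =
      (fiber_card {1..n} t)(star r l := fiber_card {1..n} t (star r l) + 1)"
proof -
  have patch_r: "patch C t r i = (t(l := star r l)) i" if "i \<in> {1..n}" for i
    using that by (auto simp: patch_def C)
  have "patch C t (t l) l = t l"
    using assms(1,2) by (simp add: patch_def C in_star_def)
  then have "t i = patch C t r i \<or> t i = patch C t (t l) i" if "i \<in> {1..n}" for i
    using patch_r [OF that] by (cases "i = l") auto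
  then show "graph_on {1..n} t \<subseteq> graph_on {1..n} (patch C t r) \<union> graph_on {1..n} (patch C t (t l))"
    unfolding graph_on_def by fastforce
  have "fiber_card {1..n} (patch C t r) = fiber_card {1..n} (t(l := star r l))"
    using patch_r by (rule fiber_card_cong)
  then show "(fiber_card {1..n} (patch C t r))(t l := fiber_card {1..n} (patch C t r) (t l) + 1) =
      (fiber_card {1..n} t)(star r l := fiber_card {1..n} t (star r l) + 1)"
    using fiber_card_fun_upd [OF _ assms(2), of t "star r l"] by simp
qed

end

locale acyclic_tope_star = acyclic_tope_arrangement + tope_star
begin

lemma A_fiber_card_exchange:
  assumes t: "in_star t" and r: "r \<in> {1..d}" and l: "l \<in> {1..n}"
    and C: "C = {i \<in> {1..n}. t i \<noteq> star r i} - {l}"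
    and choice: "\<And>m. m \<in> C \<Longrightarrow> star (t l) m = star r m"
    and patches: "\<And>x. x \<in> {1..d} \<Longrightarrow> A (fiber_card {1..n} (patch C t x)) = graph_on {1..n} (patch C t x)"
  shows "A (fiber_card {1..n} t) = graph_on {1..n} t"
proof -
  have t_range: "\<And>i. i \<in> {1..n} \<Longrightarrow> t i \<in> {1..d}"
    using t by (simp add: in_star_def)
  then have a: "t l \<in> {1..d}"
    using l by blast
  have p: "star r l \<in> {1..d}"
    using star_range [OF r l] .
  define w where "w = (fiber_card {1..n} t)(star r l := fiber_card {1..n} t (star r l) + 1)"
  have w_r: "(fiber_card {1..n} (patch C t r))(t l := fiber_card {1..n} (patch C t r) (t l) + 1) = w"
    unfolding w_def by (rule exchange_patches(2) [OF t l C])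
  moreover have "(fiber_card {1..n} (patch C t (t l)))(r := fiber_card {1..n} (patch C t (t l)) r + 1) = w"
    using fiber_card_patch [OF a r choice] w_r by simp
  ultimately have "A (fiber_card {1..n} (patch C t r)) \<union> A (fiber_card {1..n} (patch C t (t l))) \<subseteq> union_below w"
    using A_subset_union_below a r by blast
  moreover have "graph_on {1..n} t \<subseteq> A (fiber_card {1..n} (patch C t r)) \<union> A (fiber_card {1..n} (patch C t (t l)))"
    using exchange_patches(1) [OF t l C] patches [OF r] patches [OF a] by simp
  ultimately show ?thesis
    using A_fiber_card_if_below [OF _ p] t_range unfolding w_def by blast
qed

lemma A_fiber_card_in_star:
  assumes "in_star t" and "r \<in> {1..d}"
  shows "A (fiber_card {1..n} t) = graph_on {1..n} t"
  using assms
proof (induction "card {i \<in> {1..n}. t i \<noteq> star r i}" arbitrary: t r rule: less_induct)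
  case less
  show ?case
  proof (cases "\<exists>i\<in>{1..n}. t i \<noteq> star r i")
    case False
    then have "fiber_card {1..n} t = u(r := u r + 1)" and "graph_on {1..n} t = graph_on {1..n} (star r)"
      using fiber_card_cong [of "{1..n}" t "star r"] graph_on_cong [of "{1..n}" t "star r"]
        fiber_card_star [OF less.prems(2)] by auto
    then show ?thesis
      using graph_star [OF less.prems(2)] by simp
  next
    case True
    then obtain l where l: "l \<in> {1..n}" "t l \<noteq> star r l"
      and choice: "\<And>m. m \<in> {1..n} \<Longrightarrow> t m \<noteq> star r m \<Longrightarrow> m \<noteq> l \<Longrightarrow> star (t l) m = star r m"
      using exchange_vertex_exists [OF less.prems] by blast
    define C where "C = {i \<in> {1..n}. t i \<noteq> star r i} - {l}"
    have "card C < card {i \<in> {1..n}. t i \<noteq> star r i}"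
      unfolding C_def using l by (intro card_Diff1_less) auto
    moreover have "card {i \<in> {1..n}. patch C t x i \<noteq> star x i} \<le> card C" for x
      by (intro card_mono) (auto simp: C_def patch_def)
    ultimately have "A (fiber_card {1..n} (patch C t x)) = graph_on {1..n} (patch C t x)"
      if "x \<in> {1..d}" for x
      using less.hyps in_star_patch [OF less.prems(1) that] that by (meson le_less_trans)
    then show ?thesis
      using A_fiber_card_exchange [OF less.prems l(1) C_def] choice by (simp add: C_def)
  qed
qed

lemma tope_in_star_in_arrangement:
  assumes "is_tope n d T" and "T \<subseteq> (\<Union>j\<in>{1..d}. A (u(j := u j + 1)))"
  shows "T = A (RD T)"
proof -
  define t where "t = (\<lambda>i. THE j. (i, j) \<in> T)"
  have T: "T = graph_on {1..n} t" and t: "\<And>i. i \<in> {1..n} \<Longrightarrow> t i \<in> {1..d}"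
    using is_tope_graph_on [OF assms(1)] by (simp_all add: t_def)
  have "in_star t"
    unfolding in_star_def
  proof
    fix i
    assume i: "i \<in> {1..n}"
    then have "(i, t i) \<in> T"
      using T by simp
    then obtain j where j: "j \<in> {1..d}" and "(i, t i) \<in> A (u(j := u j + 1))"
      using assms(2) by blast
    then have "star j i = t i"
      using graph_star [OF j] by simp
    then show "t i \<in> {1..d} \<and> star (t i) i = t i"
      using t [OF i] star_self [OF j i] by simp
  qed
  moreover have "t 1 \<in> {1..d}"
    using t n_pos by simp
  ultimately have "A (fiber_card {1..n} t) = graph_on {1..n} t"
    by (rule A_fiber_card_in_star)
  then show ?thesis
    using T by (simp add: RD_graph_on)
qed

end

theorem mainTheorem10:
  fixes n d :: nat and A :: "(nat \<Rightarrow> nat) \<Rightarrow> (nat \<times> nat) set"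
  assumes "n \<ge> 1" and "d \<ge> 1"
    and "extended_tope_arrangement n d A"
    and "\<forall>w. lattice_point d (n + 1) w \<longrightarrow>
            acyclic_graph (\<Union>j\<in>{j\<in>{1..d}. w j \<ge> 1}. A (w(j := w j - 1)))"
  shows "\<forall>u T. lattice_point d (n - 1) u \<and> is_tope n d T \<and>
            T \<subseteq> (\<Union>j\<in>{1..d}. A (u(j := u j + 1)))
            \<longrightarrow> T = A (RD T)"
proof (intro allI impI, elim conjE)
  fix u T
  assume u: "lattice_point d (n - 1) u"
    and "is_tope n d T" and "T \<subseteq> (\<Union>j\<in>{1..d}. A (u(j := u j + 1)))"
  interpret tope_arrangement n d A
    by unfold_locales (rule assms(3))
  interpret acyclic_tope_star n d A u
    by unfold_locales (use assms u in \<open>auto simp: union_below_def\<close>)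
  show "T = A (RD T)"
    by (rule tope_in_star_in_arrangement) fact+
qed

end
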